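(* For every even $n\ge 2$ and every integer $1\le k\le\frac n2$, $$\sum_{j=0}^{k}\frac{q^{(n-1)j-1}-1}{q-1}\binom{n/2}{j}_{q^2}q^{2(k-j)^2-(k-j)}\frac{(q^{n+2-4k+2j};q^2)_{2k-2j}}{(q;q)_{2k-2j}}=\frac{q^{2k^2-k-1}-1}{q-1}\binom{n}{2k}_q$$ as an identity of rational functions in $q$.
   Context: $(x;t)_m=\prod_{j=0}^{m-1}(1-xt^j)$ and $\binom{c}{d}_t=\prod_{j=0}^{d-1}\frac{1-t^{c-j}}{1-t^{j+1}}$. *)

theory Defs
  imports "HOL-Computational_Algebra.Polynomial_Factorial"
begin

definition qpoch :: "'a::field \<Rightarrow> 'a \<Rightarrow> nat \<Rightarrow> 'a" where
  "qpoch x t m = (\<Prod>j<m. 1 - x * t ^ j)"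

definition qbinom :: "nat \<Rightarrow> nat \<Rightarrow> 'a::field \<Rightarrow> 'a" where
  "qbinom c d t = (\<Prod>j<d. (1 - t ^ (c - j)) / (1 - t ^ (j + 1)))"

definition qvar :: "rat poly fract" where
  "qvar = to_fract [:0, 1:]"

end

theory Submission
  imports Defs
begin

text \<open>
Put p = q^2, m = n/2, L = m - k, and let T_j be the j-th summand without its first factor.
Since (q^((n-1)j-1) - 1)/(q - 1) = (q^((n-1)j)/q - 1)/(q - 1), the identity follows from the
two evaluations  sum_j T_j = [n,2k]_q  and  sum_j q^((n-1)j) T_j = q^(2k^2-k) [n,2k]_q.
With r = k - j, the summand T_j factors as [m,k]_p [k,r]_p times an explicit product of length r,
while [n,2k]_q = [m,k]_p prod_{i<k} (1 - q^(2L+1) p^i)/(1 - q p^i). Both evaluations are then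
instances of two q-Chu-Vandermonde summations, each proved by induction on the upper index of
[k,r]_p via the q-Pascal rule.
\<close>

definition qfact :: "'a::field \<Rightarrow> nat \<Rightarrow> 'a" where
  "qfact t n = (\<Prod>i<n. 1 - t ^ Suc i)"

lemma qfact_0 [simp]: "qfact t 0 = 1"
  by (simp add: qfact_def)

lemma qfact_Suc: "qfact t (Suc n) = qfact t n * (1 - t ^ Suc n)"
  by (simp add: qfact_def)

lemma qfact_nonzero:
  assumes "\<forall>i>0. t ^ i \<noteq> (1::'a::field)"
  shows "qfact t n \<noteq> 0"
  using assms unfolding qfact_def by (auto simp: prod_zero_iff)

lemma qbinom_0 [simp]: "qbinom c 0 t = 1"
  by (simp add: qbinom_def)

lemma qbinom_Suc: "qbinom c (Suc d) t = qbinom c d t * ((1 - t ^ (c - d)) / (1 - t ^ (d + 1)))"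
  by (simp add: qbinom_def)

lemma qbinom_eq_0:
  assumes "c < d"
  shows "qbinom c d t = 0"
proof -
  have "(1 - t ^ (c - c)) / (1 - t ^ (c + 1)) = 0" by simp
  with assms show ?thesis unfolding qbinom_def
    by (metis (no_types, lifting) finite_lessThan lessThan_iff prod_zero)
qed

lemma qbinom_qfact:
  assumes h: "\<forall>i>0. t ^ i \<noteq> (1::'a::field)" and "d \<le> c"
  shows "qbinom c d t = qfact t c / (qfact t d * qfact t (c - d))"
  using assms(2)
proof (induction d)
  case 0
  then show ?case using qfact_nonzero[OF h] by simp
next
  case (Suc d)
  have IH: "qbinom c d t = qfact t c / (qfact t d * qfact t (c - d))" using Suc by simp
  have cd: "c - d = Suc (c - Suc d)" using Suc by simp
  have nz1: "1 - t ^ (d + 1) \<noteq> 0" using h by auto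
  have nz2: "1 - t ^ (c - d) \<noteq> 0" using h cd by (metis right_minus_eq zero_less_Suc)
  have f: "qfact t (c - d) = qfact t (c - Suc d) * (1 - t ^ (c - d))"
    using cd qfact_Suc by metis
  have g: "qfact t (Suc d) = qfact t d * (1 - t ^ (d + 1))" using qfact_Suc by simp
  have cancel: "\<And>a b e x y::'a. b \<noteq> 0 \<Longrightarrow> e \<noteq> 0 \<Longrightarrow> x \<noteq> 0 \<Longrightarrow> y \<noteq> 0 \<Longrightarrow>
      a / (b * (e * x)) * (x / y) = a / ((b * y) * e)"
    by (simp add: field_simps)
  show ?case unfolding qbinom_Suc IH f g
    by (rule cancel) (use qfact_nonzero[OF h] nz1 nz2 in auto)
qed

lemma qfact_ratio_split:
  fixes F S D a b :: "'a::field"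
  assumes "S \<noteq> 0" "D \<noteq> 0" "1 - a \<noteq> 0" "1 - b \<noteq> 0"
  shows "F * (1 - a * b) / ((S * (1 - a)) * (D * (1 - b)))
           = a * (F / ((S * (1 - a)) * D)) + F / (S * (D * (1 - b)))
       \<and> F * (1 - a * b) / ((S * (1 - a)) * (D * (1 - b)))
           = F / ((S * (1 - a)) * D) + b * (F / (S * (D * (1 - b))))"
proof -
  have "a * (F / ((S * (1 - a)) * D)) + F / (S * (D * (1 - b)))
      = (a * F * (1 - b) + F * (1 - a)) / ((S * (1 - a)) * (D * (1 - b)))"
    using assms by (simp add: add_divide_distrib)
  moreover have "F / ((S * (1 - a)) * D) + b * (F / (S * (D * (1 - b))))
      = (F * (1 - b) + b * F * (1 - a)) / ((S * (1 - a)) * (D * (1 - b)))"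
    using assms by (simp add: add_divide_distrib)
  moreover have "a * F * (1 - b) + F * (1 - a) = F * (1 - a * b)"
    "F * (1 - b) + b * F * (1 - a) = F * (1 - a * b)"
    by (simp_all add: algebra_simps)
  ultimately show ?thesis by simp
qed

lemma qbinom_pascal:
  fixes p :: "'a::field"
  assumes h: "\<forall>i>0. p ^ i \<noteq> 1"
  shows "qbinom (Suc K) r p = p ^ r * qbinom K r p + (if r = 0 then 0 else qbinom K (r - 1) p)"
    and "qbinom (Suc K) r p = qbinom K r p + (if r = 0 then 0 else p ^ (Suc K - r) * qbinom K (r - 1) p)"
proof -
  have "qbinom (Suc K) r p = p ^ r * qbinom K r p + (if r = 0 then 0 else qbinom K (r - 1) p)
     \<and> qbinom (Suc K) r p = qbinom K r p + (if r = 0 then 0 else p ^ (Suc K - r) * qbinom K (r - 1) p)"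
  proof (cases r)
    case 0
    then show ?thesis by simp
  next
    case (Suc s)
    consider "K < s" | "s = K" | "s < K" by linarith
    then show ?thesis
    proof cases
      case 1
      then show ?thesis using Suc by (simp add: qbinom_eq_0)
    next
      case 2
      have "qbinom (Suc K) (Suc K) p = 1" "qbinom K K p = 1"
        using qfact_nonzero[OF h] by (simp_all add: qbinom_qfact[OF h])
      then show ?thesis using Suc 2 by (simp add: qbinom_eq_0)
    next
      case 3
      obtain d where K: "K = s + Suc d" using less_imp_Suc_add[OF 3] by auto
      have e1: "qbinom (Suc K) (Suc s) p = qfact p (Suc K) / (qfact p (Suc s) * qfact p (Suc d))"
        using qbinom_qfact[OF h, of "Suc s" "Suc K"] K by simp
      have e2: "qbinom K (Suc s) p = qfact p K / (qfact p (Suc s) * qfact p d)"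
        using qbinom_qfact[OF h, of "Suc s" K] K by simp
      have e3: "qbinom K s p = qfact p K / (qfact p s * qfact p (Suc d))"
        using qbinom_qfact[OF h, of s K] K by simp
      have pK: "p ^ Suc K = p ^ Suc s * p ^ Suc d"
        unfolding K by (simp only: power_add add_Suc_right add_Suc power_Suc mult_ac)
      have f1: "qfact p (Suc K) = qfact p K * (1 - p ^ Suc s * p ^ Suc d)"
        using qfact_Suc pK by metis
      have fs: "qfact p (Suc s) = qfact p s * (1 - p ^ Suc s)"
          "qfact p (Suc d) = qfact p d * (1 - p ^ Suc d)"
        using qfact_Suc by blast+
      have sK: "Suc K - Suc s = Suc d" using K by simp
      have nz: "qfact p s \<noteq> 0" "qfact p d \<noteq> 0" "1 - p ^ Suc s \<noteq> 0" "1 - p ^ Suc d \<noteq> 0"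
        using h qfact_nonzero[OF h] by auto
      show ?thesis unfolding Suc
        by (simp only: e1 e2 e3 f1 fs sK if_False nat.simps diff_Suc_1) (rule qfact_ratio_split[OF nz])
    qed
  qed
  then show "qbinom (Suc K) r p = p ^ r * qbinom K r p + (if r = 0 then 0 else qbinom K (r - 1) p)"
    and "qbinom (Suc K) r p = qbinom K r p + (if r = 0 then 0 else p ^ (Suc K - r) * qbinom K (r - 1) p)"
    by auto
qed

lemma sum_qbinom_atMost_extend:
  assumes "K \<le> N"
  shows "(\<Sum>r\<le>N. qbinom K r p * f r) = (\<Sum>r\<le>K. qbinom K r p * f r)"
  using assms
proof (induction N rule: dec_induct)
  case base
  then show ?case by simp
next
  case (step n)
  then show ?case by (simp add: qbinom_eq_0)
qed

definition chu_term :: "'a::field \<Rightarrow> 'a \<Rightarrow> 'a \<Rightarrow> nat \<Rightarrow> 'a" where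
  "chu_term p B c r = (\<Prod>i<r. p ^ i * c * (p ^ i - B) / (1 - c * p ^ i))"

lemma chu_term_0 [simp]: "chu_term p B c 0 = 1"
  by (simp add: chu_term_def)

lemma chu_term_Suc: "chu_term p B c (Suc r) = chu_term p B c r * (p ^ r * c * (p ^ r - B) / (1 - c * p ^ r))"
  by (simp add: chu_term_def)

lemma chu_term_mult_base:
  fixes p c B :: "'a::field"
  assumes hc: "\<forall>i. c * p ^ i \<noteq> 1"
  shows "chu_term p B (c * p) r = p ^ r * (1 - c) / (1 - c * p ^ r) * chu_term p B c r"
proof (induction r)
  case 0
  then show ?case using hc[rule_format, of 0] by simp
next
  case (Suc r)
  have "1 - c * p ^ r \<noteq> 0" "1 - c * p ^ Suc r \<noteq> 0" by (metis hc right_minus_eq)+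
  moreover define x where "x = p ^ r"
  ultimately have "1 - c * x \<noteq> 0" "1 - c * (p * x) \<noteq> 0" by auto
  then show ?case unfolding chu_term_Suc Suc.IH
    by (simp add: x_def[symmetric] mult.assoc[symmetric]) (simp add: field_simps)
qed

lemma chu_term_step:
  fixes p c B :: "'a::field"
  assumes hc: "\<forall>i. c * p ^ i \<noteq> 1"
  shows "p ^ r * chu_term p B c r + chu_term p B c (Suc r) = (1 - c * B) / (1 - c) * chu_term p B (c * p) r"
proof -
  have nz: "1 - c * p ^ r \<noteq> 0" "1 - c \<noteq> 0"
    using hc[rule_format, of r] hc[rule_format, of 0] by auto
  define x where "x = p ^ r"
  define U where "U = chu_term p B c r"
  have "1 - c * x \<noteq> 0" using nz unfolding x_def by auto
  then show ?thesis unfolding chu_term_Suc chu_term_mult_base[OF hc]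
    by (simp add: x_def[symmetric] U_def[symmetric]) (use nz in \<open>simp add: field_simps\<close>)
qed

lemma qchu_sum:
  fixes p c B :: "'a::field"
  assumes hp: "\<forall>i>0. p ^ i \<noteq> 1" and hc: "\<forall>i. c * p ^ i \<noteq> 1"
  shows "(\<Sum>r\<le>K. qbinom K r p * chu_term p B c r) = (\<Prod>i<K. (1 - c * B * p ^ i) / (1 - c * p ^ i))"
  using hc
proof (induction K arbitrary: c)
  case 0
  then show ?case by simp
next
  case (Suc K c)
  have hcp: "\<forall>i. (c * p) * p ^ i \<noteq> 1" using Suc.prems by (metis mult.assoc power_Suc)
  have "(\<Sum>r\<le>Suc K. qbinom (Suc K) r p * chu_term p B c r)
      = (\<Sum>r\<le>Suc K. qbinom K r p * (p ^ r * chu_term p B c r))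
        + (\<Sum>r\<le>Suc K. (if r = 0 then 0 else qbinom K (r - 1) p) * chu_term p B c r)"
    unfolding sum.distrib[symmetric]
    by (rule sum.cong) (simp_all only: qbinom_pascal(1)[OF hp] algebra_simps)
  also have "(\<Sum>r\<le>Suc K. qbinom K r p * (p ^ r * chu_term p B c r))
      = (\<Sum>r\<le>K. qbinom K r p * (p ^ r * chu_term p B c r))"
    by (rule sum_qbinom_atMost_extend) simp
  also have "(\<Sum>r\<le>Suc K. (if r = 0 then 0 else qbinom K (r - 1) p) * chu_term p B c r)
      = (\<Sum>r\<le>K. qbinom K r p * chu_term p B c (Suc r))"
    by (subst sum.atMost_Suc_shift) simp
  also have "(\<Sum>r\<le>K. qbinom K r p * (p ^ r * chu_term p B c r)) + (\<Sum>r\<le>K. qbinom K r p * chu_term p B c (Suc r))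
      = (1 - c * B) / (1 - c) * (\<Sum>r\<le>K. qbinom K r p * chu_term p B (c * p) r)"
    by (simp only: sum.distrib[symmetric] distrib_left[symmetric] chu_term_step[OF Suc.prems])
      (simp add: sum_distrib_left mult_ac)
  also have "\<dots> = (\<Prod>i<Suc K. (1 - c * B * p ^ i) / (1 - c * p ^ i))"
    unfolding Suc.IH[OF hcp] by (subst prod.lessThan_Suc_shift) (simp add: mult_ac)
  finally show ?case .
qed

definition chu_term_dual :: "'a::field \<Rightarrow> 'a \<Rightarrow> nat \<Rightarrow> 'a \<Rightarrow> nat \<Rightarrow> 'a" where
  "chu_term_dual p A K c r = (\<Prod>i<r. (- (p ^ Suc i * (1 - A * p ^ i))) / (p ^ K * (1 - c * p ^ i)))"

lemma chu_term_dual_0 [simp]: "chu_term_dual p A K c 0 = 1"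
  by (simp add: chu_term_dual_def)

lemma chu_term_dual_Suc:
  "chu_term_dual p A K c (Suc r)
     = chu_term_dual p A K c r * ((- (p ^ Suc r * (1 - A * p ^ r))) / (p ^ K * (1 - c * p ^ r)))"
  by (simp add: chu_term_dual_def)

lemma chu_term_dual_Suc_K:
  fixes p :: "'a::field"
  assumes "p \<noteq> 0"
  shows "chu_term_dual p A (Suc K) c r = chu_term_dual p A K c r / p ^ r"
proof (induction r)
  case 0
  then show ?case by simp
next
  case (Suc r)
  define x where "x = p ^ r"
  define y where "y = p ^ K"
  define W where "W = chu_term_dual p A K c r"
  have "x \<noteq> 0" "y \<noteq> 0" using assms unfolding x_def y_def by auto
  then show ?case unfolding chu_term_dual_Suc Suc.IH
    by (simp add: x_def[symmetric] y_def[symmetric] W_def[symmetric])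
qed

lemma chu_term_dual_mult_base:
  fixes p c :: "'a::field"
  assumes hc: "\<forall>i. c * p ^ i \<noteq> 1"
  shows "chu_term_dual p A K (c * p) r = (1 - c) / (1 - c * p ^ r) * chu_term_dual p A K c r"
proof (induction r)
  case 0
  then show ?case using hc[rule_format, of 0] by simp
next
  case (Suc r)
  have "1 - c * p ^ r \<noteq> 0" "1 - c * p ^ Suc r \<noteq> 0" by (metis hc right_minus_eq)+
  moreover define x where "x = p ^ r"
  moreover define y where "y = p ^ K"
  moreover define W where "W = chu_term_dual p A K c r"
  ultimately have "1 - c * x \<noteq> 0" "1 - c * (p * x) \<noteq> 0" by auto
  then show ?case unfolding chu_term_dual_Suc Suc.IH
    by (simp add: x_def[symmetric] y_def[symmetric] W_def[symmetric] mult.assoc[symmetric])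
qed

lemma chu_term_dual_step:
  fixes p c A :: "'a::field"
  assumes hc: "\<forall>i. c * p ^ i \<noteq> 1" and p0: "p \<noteq> 0" and "r \<le> K"
  shows "chu_term_dual p A (Suc K) c r + p ^ (K - r) * chu_term_dual p A (Suc K) c (Suc r)
       = (A - c) / (1 - c) * chu_term_dual p A K (c * p) r"
proof -
  obtain d where K: "K = r + d" using \<open>r \<le> K\<close> by (metis le_add_diff_inverse)
  have nz: "1 - c * p ^ r \<noteq> 0" "1 - c \<noteq> 0" using hc[rule_format, of r] hc[rule_format, of 0] by auto
  define x where "x = p ^ r"
  define y where "y = p ^ d"
  define W where "W = chu_term_dual p A K c r"
  have pK: "p ^ K = x * y" "p ^ (K - r) = y" unfolding K x_def y_def by (simp_all add: power_add)
  have nz': "1 - c * x \<noteq> 0" "x \<noteq> 0" "y \<noteq> 0" using nz p0 unfolding x_def y_def by auto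
  have px: "p ^ r = x" by (simp add: x_def)
  have e1: "chu_term_dual p A (Suc K) c (Suc r) = W / x * ((- (p * x * (1 - A * x))) / (p * (x * y) * (1 - c * x)))"
    by (simp only: chu_term_dual_Suc chu_term_dual_Suc_K[OF p0] W_def[symmetric] power_Suc pK px)
  have e2: "chu_term_dual p A (Suc K) c r = W / x"
    by (simp only: chu_term_dual_Suc_K[OF p0] W_def[symmetric] px)
  have e3: "chu_term_dual p A K (c * p) r = (1 - c) / (1 - c * x) * W"
    by (simp only: chu_term_dual_mult_base[OF hc] W_def[symmetric] px)
  have "W / x + y * (W / x * ((- (p * x * (1 - A * x))) / (p * (x * y) * (1 - c * x))))
      = W * (A - c) / (1 - c * x)"
    using nz' p0 by (simp add: field_simps)
  also have "\<dots> = (A - c) / (1 - c) * ((1 - c) / (1 - c * x) * W)"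
    using nz by simp
  finally show ?thesis unfolding e1 e2 e3 pK .
qed

lemma qchu_sum_dual:
  fixes p c A :: "'a::field"
  assumes hp: "\<forall>i>0. p ^ i \<noteq> 1" and hc: "\<forall>i. c * p ^ i \<noteq> 1" and p0: "p \<noteq> 0"
  shows "(\<Sum>r\<le>K. qbinom K r p * chu_term_dual p A K c r) = (\<Prod>i<K. (A - c * p ^ i) / (1 - c * p ^ i))"
  using hc
proof (induction K arbitrary: c)
  case 0
  then show ?case by simp
next
  case (Suc K c)
  have hcp: "\<forall>i. (c * p) * p ^ i \<noteq> 1" using Suc.prems by (metis mult.assoc power_Suc)
  have "(\<Sum>r\<le>Suc K. qbinom (Suc K) r p * chu_term_dual p A (Suc K) c r)
      = (\<Sum>r\<le>Suc K. qbinom K r p * chu_term_dual p A (Suc K) c r)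
        + (\<Sum>r\<le>Suc K. (if r = 0 then 0 else p ^ (Suc K - r) * qbinom K (r - 1) p) * chu_term_dual p A (Suc K) c r)"
    unfolding sum.distrib[symmetric]
    by (rule sum.cong) (simp_all only: qbinom_pascal(2)[OF hp] algebra_simps)
  also have "(\<Sum>r\<le>Suc K. qbinom K r p * chu_term_dual p A (Suc K) c r)
      = (\<Sum>r\<le>K. qbinom K r p * chu_term_dual p A (Suc K) c r)"
    by (rule sum_qbinom_atMost_extend) simp
  also have "(\<Sum>r\<le>Suc K. (if r = 0 then 0 else p ^ (Suc K - r) * qbinom K (r - 1) p) * chu_term_dual p A (Suc K) c r)
      = (\<Sum>r\<le>K. qbinom K r p * (p ^ (K - r) * chu_term_dual p A (Suc K) c (Suc r)))"
    by (subst sum.atMost_Suc_shift) (simp add: mult_ac)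
  also have "(\<Sum>r\<le>K. qbinom K r p * chu_term_dual p A (Suc K) c r)
        + (\<Sum>r\<le>K. qbinom K r p * (p ^ (K - r) * chu_term_dual p A (Suc K) c (Suc r)))
      = (A - c) / (1 - c) * (\<Sum>r\<le>K. qbinom K r p * chu_term_dual p A K (c * p) r)"
    unfolding sum.distrib[symmetric] distrib_left[symmetric] sum_distrib_left
    by (rule sum.cong) (simp_all add: chu_term_dual_step[OF Suc.prems p0])
  also have "\<dots> = (\<Prod>i<Suc K. (A - c * p ^ i) / (1 - c * p ^ i))"
    unfolding Suc.IH[OF hcp] by (subst prod.lessThan_Suc_shift) (simp add: mult_ac)
  finally show ?case .
qed

lemma qpoch_power_eq_qfact_div:
  fixes p :: "'a::field"
  assumes hp: "\<forall>i>0. p ^ i \<noteq> 1"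
  shows "qpoch (p ^ Suc s) p d = qfact p (s + d) / qfact p s"
proof (induction d)
  case 0
  then show ?case using qfact_nonzero[OF hp] by (simp add: qpoch_def)
next
  case (Suc d)
  have "qpoch (p ^ Suc s) p (Suc d) = qpoch (p ^ Suc s) p d * (1 - p ^ Suc (s + d))"
    by (simp add: qpoch_def power_add)
  also have "\<dots> = qfact p (s + Suc d) / qfact p s" unfolding Suc.IH by (simp add: qfact_Suc)
  finally show ?case .
qed

lemma qpoch_self_even_length:
  fixes q :: "'a::field"
  shows "qpoch q q (2 * r) = (\<Prod>i<r. 1 - q * (q ^ 2) ^ i) * qfact (q ^ 2) r"
proof (induction r)
  case 0
  then show ?case by (simp add: qpoch_def)
next
  case (Suc r)
  have even: "q ^ (2 * r) = (q ^ 2) ^ r" by (simp add: power_mult)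
  have "q * q ^ Suc (2 * r) = q ^ (2 * Suc r)" by simp
  then have odd: "q * q ^ Suc (2 * r) = (q ^ 2) ^ Suc r" by (simp only: power_mult)
  have "qpoch q q (2 * Suc r) = qpoch q q (2 * r) * (1 - q * q ^ (2 * r)) * (1 - q * q ^ Suc (2 * r))"
    by (simp add: qpoch_def)
  also have "\<dots> = (\<Prod>i<Suc r. 1 - q * (q ^ 2) ^ i) * qfact (q ^ 2) (Suc r)"
    unfolding Suc.IH qfact_Suc even odd by (simp add: mult_ac)
  finally show ?case .
qed

lemma prod_one_minus_power_diff:
  fixes p :: "'a::field"
  assumes hp: "\<forall>i>0. p ^ i \<noteq> 1" and "r \<le> L"
  shows "(\<Prod>i<r. 1 - p ^ (L - i)) = qfact p L / qfact p (L - r)"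
  using assms(2)
proof (induction r)
  case 0
  then show ?case using qfact_nonzero[OF hp] by simp
next
  case (Suc r)
  have Lr: "L - r = Suc (L - Suc r)" using Suc by simp
  have f: "qfact p (L - r) = qfact p (L - Suc r) * (1 - p ^ (L - r))" using Lr qfact_Suc by metis
  have "1 - p ^ (L - r) \<noteq> 0" using hp Lr by (metis right_minus_eq zero_less_Suc)
  then show ?case using Suc qfact_nonzero[OF hp] by (simp add: f)
qed

lemma prod_power_odd:
  fixes q :: "'a::field"
  shows "(\<Prod>i<r. (q ^ 2) ^ i * (q ^ 2) ^ i * q) = q ^ (2 * r ^ 2 - r)"
proof (induction r)
  case 0
  then show ?case by simp
next
  case (Suc r)
  have e: "2 * (Suc r) ^ 2 - Suc r = (2 * r ^ 2 - r) + (4 * r + 1)"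
    by (simp add: power2_eq_square algebra_simps)
  have "(q ^ 2) ^ r * (q ^ 2) ^ r * q = q ^ (2 * r) * q ^ (2 * r) * q ^ 1" by (simp add: power_mult)
  also have "\<dots> = q ^ (2 * r + 2 * r + 1)" by (simp only: power_add)
  also have "2 * r + 2 * r + 1 = 4 * r + 1" by simp
  finally have "(q ^ 2) ^ r * (q ^ 2) ^ r * q = q ^ (4 * r + 1)" .
  then show ?case unfolding prod.lessThan_Suc Suc.IH e power_add by simp
qed

lemma power_square_ne_1:
  fixes q :: "'a::field"
  assumes "\<forall>i>0. q ^ i \<noteq> 1"
  shows "\<forall>i>0. (q ^ 2) ^ i \<noteq> 1"
  using assms by (simp add: power_mult[symmetric])

lemma odd_power_ne_1:
  fixes q :: "'a::field"
  assumes "\<forall>i>0. q ^ i \<noteq> 1"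
  shows "\<forall>i. q * (q ^ 2) ^ i \<noteq> 1"
proof
  fix i
  have "q * (q ^ 2) ^ i = q ^ Suc (2 * i)" by (simp add: power_mult)
  then show "q * (q ^ 2) ^ i \<noteq> 1" using assms by (metis zero_less_Suc)
qed

lemma prod_lessThan_double: "(\<Prod>i<2 * k. f i) = (\<Prod>i<k. f (2 * i) * f (Suc (2 * i)))"
  by (induction k) (simp_all add: mult_ac)

text \<open>The factors of [2m,2k]_q with even and odd index are grouped; the odd ones are reindexed by i \<mapsto> k - 1 - i.\<close>

lemma qbinom_double:
  fixes q :: "'a::field"
  assumes m: "m = k + L"
  shows "qbinom (2 * m) (2 * k) q
       = qbinom m k (q ^ 2) * (\<Prod>i<k. (1 - q * (q ^ 2) ^ L * (q ^ 2) ^ i) / (1 - q * (q ^ 2) ^ i))"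
proof -
  define p where "p = q ^ 2"
  have "qbinom (2 * m) (2 * k) q
      = (\<Prod>i<k. ((1 - p ^ (m - i)) / (1 - p ^ (i + 1))) * ((1 - q ^ (2 * m - Suc (2 * i))) / (1 - q * p ^ i)))"
    unfolding qbinom_def prod_lessThan_double
  proof (rule prod.cong)
    fix i
    have a: "q ^ (2 * m - 2 * i) = p ^ (m - i)"
      unfolding p_def by (simp add: power_mult[symmetric] diff_mult_distrib2)
    have b: "q ^ (2 * i + 1) = q * p ^ i" unfolding p_def by (simp add: power_mult[symmetric])
    have "Suc (2 * i) + 1 = 2 * (i + 1)" by simp
    then have c: "q ^ (Suc (2 * i) + 1) = p ^ (i + 1)" unfolding p_def by (simp only: power_mult)
    show "(1 - q ^ (2 * m - 2 * i)) / (1 - q ^ (2 * i + 1)) * ((1 - q ^ (2 * m - Suc (2 * i))) / (1 - q ^ (Suc (2 * i) + 1)))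
        = ((1 - p ^ (m - i)) / (1 - p ^ (i + 1))) * ((1 - q ^ (2 * m - Suc (2 * i))) / (1 - q * p ^ i))"
      unfolding a b c by (simp add: field_simps)
  qed simp
  also have "\<dots> = qbinom m k p * ((\<Prod>i<k. 1 - q ^ (2 * m - Suc (2 * i))) / (\<Prod>i<k. 1 - q * p ^ i))"
    by (simp add: prod.distrib qbinom_def prod_dividef)
  also have "(\<Prod>i<k. 1 - q ^ (2 * m - Suc (2 * i))) = (\<Prod>i<k. 1 - q * p ^ L * p ^ (k - Suc i))"
  proof (rule prod.cong)
    fix i assume "i \<in> {..<k}"
    then have "2 * m - Suc (2 * i) = Suc (2 * L + 2 * (k - Suc i))" unfolding m by simp
    then show "1 - q ^ (2 * m - Suc (2 * i)) = 1 - q * p ^ L * p ^ (k - Suc i)"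
      unfolding p_def by (simp add: power_add power_mult[symmetric])
  qed simp
  also have "\<dots> = (\<Prod>i<k. 1 - q * p ^ L * p ^ i)" by (rule prod.nat_diff_reindex)
  finally show ?thesis unfolding p_def by (simp add: prod_dividef)
qed

lemma chu_term_eq_0:
  fixes p :: "'a::field"
  assumes "L < r"
  shows "chu_term p (p ^ L) c r = 0"
  unfolding chu_term_def using assms by (auto simp: prod_zero_iff)

lemma chu_term_power:
  fixes q :: "'a::field"
  assumes hp: "\<forall>i>0. (q ^ 2) ^ i \<noteq> 1" and "r \<le> L"
  shows "chu_term (q ^ 2) ((q ^ 2) ^ L) q r
       = q ^ (2 * r ^ 2 - r) * (qfact (q ^ 2) L / qfact (q ^ 2) (L - r)) / (\<Prod>i<r. 1 - q * (q ^ 2) ^ i)"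
proof -
  define p where "p = q ^ 2"
  have "chu_term p (p ^ L) q r = (\<Prod>i<r. (p ^ i * p ^ i * q) * (1 - p ^ (L - i)) / (1 - q * p ^ i))"
    unfolding chu_term_def
  proof (rule prod.cong)
    fix i assume "i \<in> {..<r}"
    with \<open>r \<le> L\<close> have "p ^ L = p ^ i * p ^ (L - i)" by (simp add: power_add[symmetric])
    then show "p ^ i * q * (p ^ i - p ^ L) / (1 - q * p ^ i) = (p ^ i * p ^ i * q) * (1 - p ^ (L - i)) / (1 - q * p ^ i)"
      by (simp add: algebra_simps)
  qed simp
  also have "\<dots> = (\<Prod>i<r. p ^ i * p ^ i * q) * (\<Prod>i<r. 1 - p ^ (L - i)) / (\<Prod>i<r. 1 - q * p ^ i)"
    by (simp add: prod_dividef prod.distrib)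
  finally show ?thesis
    unfolding p_def prod_power_odd prod_one_minus_power_diff[OF hp \<open>r \<le> L\<close>] .
qed

lemma qpoch_powi_eq_0:
  fixes q :: "'a::field"
  assumes q0: "q \<noteq> 0" and "L < r"
  shows "qpoch (q powi (2 * int L + 2 - 2 * int r)) (q ^ 2) (2 * r) = 0"
proof -
  define e where "e = 2 * int L + 2 - 2 * int r"
  define i where "i = r - L - 1"
  have "q powi e * (q ^ 2) ^ i = q powi e * q powi (int (2 * i))"
    by (simp only: power_int_of_nat power_mult)
  also have "\<dots> = q powi (e + int (2 * i))" using q0 by (simp add: power_int_add)
  also have "e + int (2 * i) = 0" unfolding e_def i_def using \<open>L < r\<close> by simp
  finally have "1 - q powi e * (q ^ 2) ^ i = 0" by simp
  moreover have "i < 2 * r" unfolding i_def using \<open>L < r\<close> by simp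
  ultimately show ?thesis unfolding qpoch_def e_def[symmetric]
    by (metis (no_types, lifting) finite_lessThan lessThan_iff prod_zero)
qed

definition main_term :: "'a::field \<Rightarrow> nat \<Rightarrow> nat \<Rightarrow> nat \<Rightarrow> 'a" where
  "main_term q n k j = qbinom (n div 2) j (q ^ 2) * q ^ (2 * (k - j) ^ 2 - (k - j))
     * qpoch (q powi (int n + 2 - 4 * int k + 2 * int j)) (q ^ 2) (2 * k - 2 * j) / qpoch q q (2 * k - 2 * j)"

lemma main_term_eq_chu_term:
  fixes q :: "'a::field"
  assumes hq: "\<forall>i>0. q ^ i \<noteq> 1" and q0: "q \<noteq> 0" and "r \<le> k"
  shows "main_term q (2 * (k + L)) k (k - r)
       = qbinom (k + L) k (q ^ 2) * (qbinom k r (q ^ 2) * chu_term (q ^ 2) ((q ^ 2) ^ L) q r)"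
proof -
  define p where "p = q ^ 2"
  have hp: "\<forall>i>0. p ^ i \<noteq> 1" unfolding p_def by (rule power_square_ne_1[OF hq])
  have r2: "2 * k - 2 * (k - r) = 2 * r" using \<open>r \<le> k\<close> by simp
  have e: "int (2 * (k + L)) + 2 - 4 * int k + 2 * int (k - r) = 2 * int L + 2 - 2 * int r"
    using \<open>r \<le> k\<close> by simp
  have main: "main_term q (2 * (k + L)) k (k - r)
      = qbinom (k + L) (k - r) p * q ^ (2 * r ^ 2 - r)
        * qpoch (q powi (2 * int L + 2 - 2 * int r)) p (2 * r) / qpoch q q (2 * r)"
    unfolding main_term_def e r2 p_def using \<open>r \<le> k\<close> by simp
  show ?thesis
  proof (cases "L < r")
    case True
    then show ?thesis
      unfolding main p_def qpoch_powi_eq_0[OF q0 True] chu_term_eq_0[OF True] by simp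
  next
    case False
    then have "r \<le> L" by simp
    then have "2 * int L + 2 - 2 * int r = int (2 * Suc (L - r))" by simp
    then have "q powi (2 * int L + 2 - 2 * int r) = p ^ Suc (L - r)"
      unfolding p_def power_mult[symmetric] by (simp only: power_int_of_nat)
    then have A1: "qpoch (q powi (2 * int L + 2 - 2 * int r)) p (2 * r) = qfact p (L + r) / qfact p (L - r)"
      using \<open>r \<le> L\<close> by (simp only: qpoch_power_eq_qfact_div[OF hp]) (simp add: add.commute)
    define D where "D = (\<Prod>i<r. 1 - q * p ^ i)"
    have "D \<noteq> 0" unfolding D_def p_def using odd_power_ne_1[OF hq] by (auto simp: prod_zero_iff)
    have A2: "qpoch q q (2 * r) = D * qfact p r"
      unfolding D_def p_def by (rule qpoch_self_even_length)
    have A3: "chu_term p (p ^ L) q r = q ^ (2 * r ^ 2 - r) * (qfact p L / qfact p (L - r)) / D"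
      unfolding D_def p_def by (rule chu_term_power[OF power_square_ne_1[OF hq] \<open>r \<le> L\<close>])
    have B1: "qbinom (k + L) (k - r) p = qfact p (k + L) / (qfact p (k - r) * qfact p (L + r))"
      using qbinom_qfact[OF hp, of "k - r" "k + L"] \<open>r \<le> k\<close> by (simp add: add.commute)
    have B2: "qbinom (k + L) k p = qfact p (k + L) / (qfact p k * qfact p L)"
      using qbinom_qfact[OF hp, of k "k + L"] by simp
    have B3: "qbinom k r p = qfact p k / (qfact p r * qfact p (k - r))"
      using qbinom_qfact[OF hp \<open>r \<le> k\<close>] .
    show ?thesis unfolding p_def[symmetric] main A1 A2 A3 B1 B2 B3
      using qfact_nonzero[OF hp] \<open>D \<noteq> 0\<close> by (simp add: field_simps)
  qed
qed

lemma chu_term_dual_eq_chu_term: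
  fixes q :: "'a::field"
  assumes q0: "q \<noteq> 0" and "1 \<le> k"
  shows "chu_term_dual (q ^ 2) (1 / (q ^ 2) ^ L) k q r * q ^ ((2 * (k + L) - 1) * r)
       = chu_term (q ^ 2) ((q ^ 2) ^ L) q r"
proof (induction r)
  case 0
  then show ?case by simp
next
  case (Suc r)
  define n where "n = 2 * (k + L)"
  define p where "p = q ^ 2"
  define x where "x = p ^ r"
  define P where "P = p ^ L"
  define Kp where "Kp = p ^ k"
  have "Suc (n - 1) = n" using \<open>1 \<le> k\<close> unfolding n_def by simp
  then have "q * q ^ (n - 1) = q ^ n" by (metis power_Suc)
  also have "\<dots> = Kp * P" unfolding n_def Kp_def P_def p_def by (simp add: power_mult power_add)
  finally have Qeq: "q ^ (n - 1) = Kp * P / q" using q0 by (simp add: field_simps)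
  have nz: "P \<noteq> 0" "Kp \<noteq> 0" "p \<noteq> 0" using q0 unfolding P_def Kp_def p_def by auto
  have pq: "p = q * q" unfolding p_def by (simp add: power2_eq_square)
  have factor: "(- (p ^ Suc r * (1 - (1 / P) * p ^ r))) / (Kp * (1 - q * p ^ r)) * q ^ (n - 1)
      = p ^ r * q * (p ^ r - P) / (1 - q * p ^ r)"
  proof (cases "1 - q * x = 0")
    case True
    then show ?thesis unfolding x_def by simp
  next
    case False
    then show ?thesis unfolding Qeq power_Suc x_def[symmetric] using nz q0
      by (simp add: field_simps pq)
  qed
  have "chu_term_dual p (1 / P) k q (Suc r) * q ^ ((n - 1) * Suc r)
      = (chu_term_dual p (1 / P) k q r * q ^ ((n - 1) * r))
        * ((- (p ^ Suc r * (1 - (1 / P) * p ^ r))) / (Kp * (1 - q * p ^ r)) * q ^ (n - 1))"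
    unfolding chu_term_dual_Suc Kp_def by (simp add: power_add mult_ac)
  also have "\<dots> = chu_term p P q (Suc r)"
    unfolding factor using Suc.IH unfolding p_def P_def n_def chu_term_Suc by simp
  finally show ?case unfolding p_def P_def n_def .
qed

lemma sum_atLeast0AtMost_rev:
  fixes f :: "nat \<Rightarrow> 'a::comm_monoid_add"
  shows "(\<Sum>j=0..k. f j) = (\<Sum>r\<le>k. f (k - r))"
  using sum.atLeastAtMost_rev[of f 0 k] by (simp add: atLeast0AtMost)

lemma sum_main_term:
  fixes q :: "'a::field"
  assumes hq: "\<forall>i>0. q ^ i \<noteq> 1" and q0: "q \<noteq> 0"
  shows "(\<Sum>j=0..k. main_term q (2 * (k + L)) k j) = qbinom (2 * (k + L)) (2 * k) q"
proof -
  define p where "p = q ^ 2"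
  have "(\<Sum>j=0..k. main_term q (2 * (k + L)) k j) = (\<Sum>r\<le>k. main_term q (2 * (k + L)) k (k - r))"
    by (rule sum_atLeast0AtMost_rev)
  also have "\<dots> = qbinom (k + L) k p * (\<Sum>r\<le>k. qbinom k r p * chu_term p (p ^ L) q r)"
    unfolding sum_distrib_left p_def
    by (rule sum.cong[OF refl], rule main_term_eq_chu_term[OF hq q0], simp)
  also have "\<dots> = qbinom (2 * (k + L)) (2 * k) q"
    unfolding p_def qchu_sum[OF power_square_ne_1[OF hq] odd_power_ne_1[OF hq]]
    by (rule qbinom_double[symmetric]) simp
  finally show ?thesis .
qed

lemma sum_weighted_main_term:
  fixes q :: "'a::field"
  assumes hq: "\<forall>i>0. q ^ i \<noteq> 1" and q0: "q \<noteq> 0" and "1 \<le> k"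
  shows "(\<Sum>j=0..k. q ^ ((2 * (k + L) - 1) * j) * main_term q (2 * (k + L)) k j)
       = q ^ (2 * k ^ 2 - k) * qbinom (2 * (k + L)) (2 * k) q"
proof -
  define n where "n = 2 * (k + L)"
  define p where "p = q ^ 2"
  have p0: "p \<noteq> 0" using q0 p_def by simp
  define X where "X = (\<Prod>i<k. (1 - q * p ^ L * p ^ i) / (1 - q * p ^ i))"
  have "(\<Sum>j=0..k. q ^ ((n - 1) * j) * main_term q n k j)
      = (\<Sum>r\<le>k. q ^ ((n - 1) * (k - r)) * main_term q n k (k - r))"
    by (rule sum_atLeast0AtMost_rev)
  also have "\<dots> = (\<Sum>r\<le>k. q ^ ((n - 1) * k) * qbinom (k + L) k p * (qbinom k r p * chu_term_dual p (1 / p ^ L) k q r))"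
  proof (rule sum.cong)
    fix r assume "r \<in> {..k}"
    then have "r \<le> k" by simp
    then have "(n - 1) * (k - r) + (n - 1) * r = (n - 1) * k"
      by (metis add_mult_distrib2 le_add_diff_inverse2)
    then have e: "q ^ ((n - 1) * (k - r)) * q ^ ((n - 1) * r) = q ^ ((n - 1) * k)"
      by (metis power_add)
    have T: "main_term q n k (k - r) = qbinom (k + L) k p * (qbinom k r p * chu_term p (p ^ L) q r)"
      unfolding n_def p_def by (rule main_term_eq_chu_term[OF hq q0 \<open>r \<le> k\<close>])
    have D: "chu_term_dual p (1 / p ^ L) k q r * q ^ ((n - 1) * r) = chu_term p (p ^ L) q r"
      unfolding n_def p_def by (rule chu_term_dual_eq_chu_term[OF q0 \<open>1 \<le> k\<close>])
    show "q ^ ((n - 1) * (k - r)) * main_term q n k (k - r)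
        = q ^ ((n - 1) * k) * qbinom (k + L) k p * (qbinom k r p * chu_term_dual p (1 / p ^ L) k q r)"
      unfolding T D[symmetric] e[symmetric] by (simp only: mult_ac)
  qed simp
  also have "\<dots> = q ^ ((n - 1) * k) * qbinom (k + L) k p * (\<Prod>i<k. (1 / p ^ L - q * p ^ i) / (1 - q * p ^ i))"
    unfolding sum_distrib_left[symmetric]
      qchu_sum_dual[OF power_square_ne_1[OF hq] odd_power_ne_1[OF hq], folded p_def, OF p0] ..
  also have "(\<Prod>i<k. (1 / p ^ L - q * p ^ i) / (1 - q * p ^ i))
      = (\<Prod>i<k. (1 - q * p ^ L * p ^ i) / (1 - q * p ^ i) * (1 / p ^ L))"
    using p0 by (intro prod.cong) (simp_all add: field_simps)
  also have "\<dots> = X * (1 / p ^ L) ^ k"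
    unfolding X_def prod.distrib prod_constant card_lessThan ..
  also have "(n - 1) * k = (2 * k ^ 2 - k) + 2 * L * k"
    using \<open>1 \<le> k\<close> unfolding n_def by (simp add: algebra_simps power2_eq_square diff_mult_distrib)
  also have "q ^ ((2 * k ^ 2 - k) + 2 * L * k) * qbinom (k + L) k p * (X * (1 / p ^ L) ^ k)
      = q ^ (2 * k ^ 2 - k) * (qbinom (k + L) k p * X)"
    unfolding p_def using q0 by (simp add: power_add power_mult[symmetric] field_simps)
  also have "qbinom (k + L) k p * X = qbinom n (2 * k) q"
    unfolding n_def X_def p_def by (rule qbinom_double[symmetric]) simp
  finally show ?thesis unfolding n_def .
qed

lemma power_int_of_nat_minus_1:
  fixes q :: "'a::field"
  assumes "q \<noteq> 0"
  shows "q powi (int m - 1) = q ^ m / q"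
  using power_int_diff[of q "int m" 1] assms by (simp add: power_int_of_nat)

lemma main_identity:
  fixes q :: "'a::field" and n k :: nat
  assumes hq: "\<forall>i>0. q ^ i \<noteq> 1" and q0: "q \<noteq> 0"
    and "even n" and "1 \<le> k" and "k \<le> n div 2"
  shows "(\<Sum>j=0..k.
            (q powi (int ((n - 1) * j) - 1) - 1) / (q - 1)
          * qbinom (n div 2) j (q ^ 2)
          * q ^ (2 * (k - j) ^ 2 - (k - j))
          * qpoch (q powi (int n + 2 - 4 * int k + 2 * int j)) (q ^ 2) (2 * k - 2 * j)
          / qpoch q q (2 * k - 2 * j))
       = (q powi (2 * int k ^ 2 - int k - 1) - 1) / (q - 1) * qbinom n (2 * k) q"
proof -
  define L where "L = n div 2 - k"
  have n: "n = 2 * (k + L)" unfolding L_def using assms(3,5) by simp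
  define C where "C = qbinom n (2 * k) q"
  have split: "(x / q - 1) / (q - 1) * t = x * t / (q * (q - 1)) - t / (q - 1)" for x t
  proof -
    have "(x / q - 1) / (q - 1) * t = (x - q) * t / (q * (q - 1))"
      using q0 by (simp add: field_simps)
    also have "\<dots> = x * t / (q * (q - 1)) - q * t / (q * (q - 1))"
      by (simp add: diff_divide_distrib left_diff_distrib)
    finally show ?thesis using q0 by simp
  qed
  have summand: "(q powi (int ((n - 1) * j) - 1) - 1) / (q - 1)
          * qbinom (n div 2) j (q ^ 2)
          * q ^ (2 * (k - j) ^ 2 - (k - j))
          * qpoch (q powi (int n + 2 - 4 * int k + 2 * int j)) (q ^ 2) (2 * k - 2 * j)
          / qpoch q q (2 * k - 2 * j)
      = q ^ ((n - 1) * j) * main_term q n k j / (q * (q - 1)) - main_term q n k j / (q - 1)" for j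
    unfolding main_term_def power_int_of_nat_minus_1[OF q0] split[symmetric]
    by (simp only: mult.assoc times_divide_eq_right)
  have "2 * int k ^ 2 - int k = int (2 * k ^ 2 - k)"
    using \<open>1 \<le> k\<close> by (simp add: of_nat_diff power2_eq_square)
  then have rhs: "q powi (2 * int k ^ 2 - int k - 1) = q ^ (2 * k ^ 2 - k) / q"
    by (simp add: power_int_of_nat_minus_1[OF q0])
  have "(\<Sum>j=0..k. q ^ ((n - 1) * j) * main_term q n k j / (q * (q - 1)) - main_term q n k j / (q - 1))
      = (\<Sum>j=0..k. q ^ ((n - 1) * j) * main_term q n k j) / (q * (q - 1))
        - (\<Sum>j=0..k. main_term q n k j) / (q - 1)"
    by (simp only: sum_subtractf sum_divide_distrib)
  also have "\<dots> = (q ^ (2 * k ^ 2 - k) / q - 1) / (q - 1) * C"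
    unfolding C_def n sum_main_term[OF hq q0] sum_weighted_main_term[OF hq q0 \<open>1 \<le> k\<close>] split ..
  finally show ?thesis unfolding summand rhs C_def .
qed

lemma qvar_power: "qvar ^ i = to_fract ([:0, 1:] ^ i)"
  unfolding qvar_def by (induction i) (simp_all add: to_fract_mult[symmetric])

lemma qvar_power_ne_1: "\<forall>i>0. qvar ^ i \<noteq> 1"
proof (intro allI impI)
  fix i :: nat
  assume "0 < i"
  then have "([:0, 1:] :: rat poly) ^ i \<noteq> 1"
    using degree_linear_power[of "0::rat" i] by (metis degree_1 less_numeral_extra(3))
  then show "qvar ^ i \<noteq> 1" unfolding qvar_power by (metis to_fract_1 to_fract_eq_iff)
qed

lemma qvar_nonzero: "qvar \<noteq> 0"
  unfolding qvar_def by simp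

theorem mainTheorem10:
  fixes n k :: nat
  assumes "even n" and "n \<ge> 2" and "1 \<le> k" and "k \<le> n div 2"
  shows "(\<Sum>j=0..k.
            (qvar powi (int ((n - 1) * j) - 1) - 1) / (qvar - 1)
          * qbinom (n div 2) j (qvar ^ 2)
          * qvar ^ (2 * (k - j) ^ 2 - (k - j))
          * qpoch (qvar powi (int n + 2 - 4 * int k + 2 * int j)) (qvar ^ 2) (2 * k - 2 * j)
          / qpoch qvar qvar (2 * k - 2 * j))
       = (qvar powi (2 * int k ^ 2 - int k - 1) - 1) / (qvar - 1) * qbinom n (2 * k) qvar"
  using main_identity[OF qvar_power_ne_1 qvar_nonzero assms(1,3,4)] .

end
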